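(* Consider the coding-DNA embedding setting described in the context. Suppose the host codon $\mathbf{X}$ is uniformly distributed on $\mathcal{X}^3$ and $X'=\alpha(\mathbf{X})$, i.e. $p(x')=|\mathcal{S}_{x'}|/64$ for all $x'\in\mathcal{X}'$. Then the achievable rate is $$R_\mathrm{c}^{\alpha(\mathrm{unif})}=\widetilde{C}_\mathrm{nc}-H(X')\ \text{bits/codon},$$ where $\widetilde{C}_\mathrm{nc}=\max_{p(\mathbf{u})} I(\mathbf{Z}_{(m)};\mathbf{U})$, the maximum being taken without constraint over all distributions of $\mathbf{U}$ on $\mathcal{X}^3$ (the capacity of the codon mutation channel $\Pi^m\otimes\Pi^m\otimes\Pi^m$).
   Context: Let $\mathcal{X}=\{\mathrm{A},\mathrm{C},\mathrm{T},\mathrm{G}\}$ (DNA bases); codons are elements of $\mathcal{X}^3$. Let $\mathcal{X}'=\{$Ala, Arg, Asn, Asp, Cys, Gln, Glu, Gly, His, Ile, Leu, Lys, Met, Phe, Pro, Ser, Thr, Trp, Tyr, Val, Stp$\}$. The genetic code is the map $\alpha:\mathcal{X}^3\to\mathcal{X}'$ whose fibres $\mathcal{S}_{x'}=\{\mathbf{x}\in\mathcal{X}^3:\alpha(\mathbf{x})=x'\}$ are: Ala: GCA, GCC, GCT, GCG; Arg: AGA, AGG, CGA, CGC, CGT, CGG; Asn: AAC, AAT; Asp: GAC, GAT; Cys: TGC, TGT; Gln: CAA, CAG; Glu: GAA, GAG; Gly: GGA, GGC, GGT, GGG; His: CAC, CAT; Ile: ATA, ATC, ATT; Leu: CTA,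 CTC, CTT, CTG, TTA, TTG; Lys: AAA, AAG; Met: ATG; Phe: TTC, TTT; Pro: CCA, CCC, CCT, CCG; Ser: AGC, AGT, TCA, TCC, TCT, TCG; Thr: ACA, ACC, ACT, ACG; Trp: TGG; Tyr: TAC, TAT; Val: GTA, GTC, GTT, GTG; Stp: TAA, TAG, TGA. These 21 sets partition $\mathcal{X}^3$. Mutation channel (Kimura model): for parameters $q\in[0,1]$ and $\gamma\in[0,3/2]$, the $4\times4$ base transition matrix $\Pi=[p(Z=z|Y=y)]$ (rows/columns ordered A, C, T, G) has diagonal entries $1-q$, entries $(1-2\gamma/3)q$ for the pairs $\{\mathrm{A},\mathrm{G}\}$ and $\{\mathrm{C},\mathrm{T}\}$, and entries $\gamma q/3$ for all other off-diagonal pairs. After $m\ge1$ cascaded independent mutation stages, a codon $\mathbf{u}$ is mapped to a random codon $\mathbf{Z}_{(m)}$ through the $64\times64$ transition matrix $\Pi^m\otimes\Pi^m\otimes\Pi^m$ (bases mutate independently). Achievable rate: given a distribution $p(x')$ of the host amino acid $X'$ on $\mathcal{X}'$, consider conditional distributions $p(\mathbf{u}|x')$ supported on $\mathcal{S}_{x'}$, and let $\mathbf{U}$ be the codon with $p(\mathbf{u})=p(x')p(\mathbf{u}|x')$ for $\mathbf{u}\in\mathcal{S}_{x'}$; $\mathbf{U}$ is the channel input and $\mathbf{Z}_{(m)}$ the output. The achievable rate is $R_\mathrm{c}^{X'}=\max_{p(\mathbf{u}|x')} I(\mathbf{Z}_{(m)};\mathbf{U})-H(X')$ bits/codon (logarithms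 base 2); $R_\mathrm{c}^{\alpha(\mathrm{unif})}$ denotes this rate when $X'=\alpha(\mathbf{X})$ with $\mathbf{X}$ uniform on $\mathcal{X}^3$. *)

theory Defs
  imports Complex_Main
begin

datatype base = A | C | T | G

lemma UNIV_base: "(UNIV :: base set) = {A, C, T, G}"
  using base.exhaust by auto

instance base :: finite
  by standard (simp add: UNIV_base)

type_synonym codon = "base \<times> base \<times> base"

datatype amino = Ala | Arg | Asn | Asp | Cys | Gln | Glu | Gly | His | Ile | Leu
  | Lys | Met | Phe | Pro | Ser | Thr | Trp | Tyr | Val | Stp

lemma UNIV_amino: "(UNIV :: amino set) =
  {Ala, Arg, Asn, Asp, Cys, Gln, Glu, Gly, His, Ile, Leu,
   Lys, Met, Phe, Pro, Ser, Thr, Trp, Tyr, Val, Stp}"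
  using amino.exhaust by auto

instance amino :: finite
  by standard (simp add: UNIV_amino)

fun alpha :: "codon \<Rightarrow> amino" where
  "alpha (T, T, T) = Phe" | "alpha (T, T, C) = Phe" | "alpha (T, T, A) = Leu" | "alpha (T, T, G) = Leu"
| "alpha (C, T, _) = Leu"
| "alpha (A, T, T) = Ile" | "alpha (A, T, C) = Ile" | "alpha (A, T, A) = Ile" | "alpha (A, T, G) = Met"
| "alpha (G, T, _) = Val"
| "alpha (T, C, _) = Ser"
| "alpha (C, C, _) = Pro"
| "alpha (A, C, _) = Thr"
| "alpha (G, C, _) = Ala"
| "alpha (T, A, T) = Tyr" | "alpha (T, A, C) = Tyr" | "alpha (T, A, A) = Stp" | "alpha (T, A, G) = Stp"
| "alpha (C, A, T) = His" | "alpha (C, A, C) = His" | "alpha (C, A, A) = Gln" | "alpha (C, A, G) = Gln"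
| "alpha (A, A, T) = Asn" | "alpha (A, A, C) = Asn" | "alpha (A, A, A) = Lys" | "alpha (A, A, G) = Lys"
| "alpha (G, A, T) = Asp" | "alpha (G, A, C) = Asp" | "alpha (G, A, A) = Glu" | "alpha (G, A, G) = Glu"
| "alpha (T, G, T) = Cys" | "alpha (T, G, C) = Cys" | "alpha (T, G, A) = Stp" | "alpha (T, G, G) = Trp"
| "alpha (C, G, _) = Arg"
| "alpha (A, G, T) = Ser" | "alpha (A, G, C) = Ser" | "alpha (A, G, A) = Arg" | "alpha (A, G, G) = Arg"
| "alpha (G, G, _) = Gly"

definition fibre :: "amino \<Rightarrow> codon set" where
  "fibre x' = {u. alpha u = x'}"

definition kimura :: "real \<Rightarrow> real \<Rightarrow> base \<Rightarrow> base \<Rightarrow> real" where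
  "kimura q \<gamma> y z =
     (if y = z then 1 - q
      else if {y, z} = {A, G} \<or> {y, z} = {C, T} then (1 - 2 * \<gamma> / 3) * q
      else \<gamma> * q / 3)"

fun kimura_pow :: "real \<Rightarrow> real \<Rightarrow> nat \<Rightarrow> base \<Rightarrow> base \<Rightarrow> real" where
  "kimura_pow q \<gamma> 0 y z = (if y = z then 1 else 0)"
| "kimura_pow q \<gamma> (Suc n) y z = (\<Sum>w\<in>UNIV. kimura_pow q \<gamma> n y w * kimura q \<gamma> w z)"

definition codon_channel :: "real \<Rightarrow> real \<Rightarrow> nat \<Rightarrow> codon \<Rightarrow> codon \<Rightarrow> real" where
  "codon_channel q \<gamma> m u z =
     (case u of (u1, u2, u3) \<Rightarrow> case z of (z1, z2, z3) \<Rightarrow>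
        kimura_pow q \<gamma> m u1 z1 * kimura_pow q \<gamma> m u2 z2 * kimura_pow q \<gamma> m u3 z3)"

definition is_distr :: "('a::finite \<Rightarrow> real) \<Rightarrow> bool" where
  "is_distr p \<longleftrightarrow> (\<forall>x. 0 \<le> p x) \<and> (\<Sum>x\<in>UNIV. p x) = 1"

definition entropy2 :: "('a::finite \<Rightarrow> real) \<Rightarrow> real" where
  "entropy2 p = - (\<Sum>x\<in>UNIV. if p x = 0 then 0 else p x * log 2 (p x))"

text \<open>Mutual information I(Z;U) for input distribution p and channel W (W u z = p(z|u)).\<close>
definition mutual_info :: "('a::finite \<Rightarrow> real) \<Rightarrow> ('a \<Rightarrow> 'b::finite \<Rightarrow> real) \<Rightarrow> real" where
  "mutual_info p W =
     (\<Sum>u\<in>UNIV. \<Sum>z\<in>UNIV.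
        if p u * W u z = 0 then 0
        else p u * W u z * log 2 (W u z / (\<Sum>u'\<in>UNIV. p u' * W u' z)))"

definition admissible_cond :: "(amino \<Rightarrow> codon \<Rightarrow> real) \<Rightarrow> bool" where
  "admissible_cond c \<longleftrightarrow>
     (\<forall>x' u. 0 \<le> c x' u) \<and> (\<forall>x' u. u \<notin> fibre x' \<longrightarrow> c x' u = 0)
     \<and> (\<forall>x'. (\<Sum>u\<in>fibre x'. c x' u) = 1)"

definition induced_codon_distr :: "(amino \<Rightarrow> real) \<Rightarrow> (amino \<Rightarrow> codon \<Rightarrow> real) \<Rightarrow> codon \<Rightarrow> real" where
  "induced_codon_distr px c u = px (alpha u) * c (alpha u) u"

text \<open>R_c^{X'} = max_{p(u|x')} I(Z_(m);U) - H(X'); the maximum (attained, by compactness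
  and continuity) is written as a supremum.\<close>
definition achievable_rate :: "real \<Rightarrow> real \<Rightarrow> nat \<Rightarrow> (amino \<Rightarrow> real) \<Rightarrow> real" where
  "achievable_rate q \<gamma> m px =
     (SUP c\<in>{c. admissible_cond c}.
        mutual_info (induced_codon_distr px c) (codon_channel q \<gamma> m)) - entropy2 px"

definition capacity_nc :: "real \<Rightarrow> real \<Rightarrow> nat \<Rightarrow> real" where
  "capacity_nc q \<gamma> m =
     (SUP p\<in>{p :: codon \<Rightarrow> real. is_distr p}. mutual_info p (codon_channel q \<gamma> m))"

definition alpha_unif :: "amino \<Rightarrow> real" where
  "alpha_unif x' = real (card (fibre x')) / 64"

end

theory Submission
  imports Defs
begin

text \<open>
  Identify the bases with the Klein four-group, A being the neutral element and
  transitions (A \<leftrightarrow> G, C \<leftrightarrow> T) the translation by G. The Kimura matrix is then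
  translation invariant, hence so are its powers, and the codon channel is
  p(z | u) = f(u + z) for a fixed distribution f on codons. Such a channel has
  all rows of equal entropy and all columns summing to 1, so
  I(Z;U) = H(Z) - H(f) \<le> log 64 - H(f), with equality for uniform U; this is the
  unconstrained capacity. The uniform codon distribution is induced by the host
  distribution alpha(unif) together with the uniform conditionals on the fibres,
  so the constrained maximum in the achievable rate attains the same value.
  Neither argument uses m \<ge> 1.
\<close>

definition output_distr :: "('a::finite \<Rightarrow> real) \<Rightarrow> ('a \<Rightarrow> 'b::finite \<Rightarrow> real) \<Rightarrow> 'b \<Rightarrow> real" where
  "output_distr p W z = (\<Sum>u\<in>UNIV. p u * W u z)"

definition uniform_distr :: "'a::finite \<Rightarrow> real" where
  "uniform_distr x = 1 / real (card (UNIV :: 'a set))"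

lemma is_distr_uniform_distr: "is_distr uniform_distr"
  by (simp add: is_distr_def uniform_distr_def)

lemma is_distr_output_distr:
  assumes "is_distr p" and "\<And>u z. 0 \<le> W u z" and "\<And>u. (\<Sum>z\<in>UNIV. W u z) = 1"
  shows "is_distr (output_distr p W)"
proof -
  have "(\<Sum>z\<in>UNIV. output_distr p W z) = (\<Sum>u\<in>UNIV. p u * (\<Sum>z\<in>UNIV. W u z))"
    unfolding output_distr_def sum_distrib_left by (rule sum.swap)
  then show ?thesis
    using assms by (auto simp: is_distr_def output_distr_def intro!: sum_nonneg)
qed

lemma output_distr_uniform:
  fixes W :: "'a::finite \<Rightarrow> 'a \<Rightarrow> real"
  assumes "\<And>z. (\<Sum>u\<in>UNIV. W u z) = 1"
  shows "output_distr uniform_distr W = uniform_distr"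
  using assms by (simp add: fun_eq_iff output_distr_def uniform_distr_def flip: sum_divide_distrib)

lemma entropy2_uniform_distr:
  "entropy2 (uniform_distr :: 'a::finite \<Rightarrow> real) = log 2 (real (card (UNIV :: 'a set)))"
  by (simp add: entropy2_def uniform_distr_def log_divide)

lemma entropy2_le_log_card:
  fixes r :: "'a::finite \<Rightarrow> real"
  assumes "is_distr r"
  shows "entropy2 r \<le> log 2 (real (card (UNIV :: 'a set)))"
proof -
  define N where "N = real (card (UNIV :: 'a set))"
  have N: "0 < N" by (simp add: N_def finite_UNIV_card_ge_0)
  have r_nonneg: "\<And>z. 0 \<le> r z" and r_sum: "(\<Sum>z\<in>UNIV. r z) = 1"
    using assms by (auto simp: is_distr_def)
  have pointwise: "- (if r z = 0 then 0 else r z * log 2 (r z)) - r z * log 2 N \<le> (1 / N - r z) / ln 2" for z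
  proof (cases "r z = 0")
    case True
    then show ?thesis using N by simp
  next
    case False
    then have r_pos: "0 < r z" using r_nonneg[of z] by simp
    have "r z * ln (1 / (N * r z)) \<le> r z * (1 / (N * r z) - 1)"
      using r_pos N by (intro mult_left_mono ln_le_minus_one) auto
    also have "\<dots> = 1 / N - r z" using r_pos N by (simp add: field_simps)
    finally have "r z * ln (1 / (N * r z)) \<le> 1 / N - r z" .
    moreover have "- (r z * log 2 (r z)) - r z * log 2 N = r z * ln (1 / (N * r z)) / ln 2"
      using r_pos N by (simp add: log_def ln_div ln_mult field_simps)
    ultimately show ?thesis using False by (simp add: divide_right_mono)
  qed
  have "(\<Sum>z\<in>UNIV. - (if r z = 0 then 0 else r z * log 2 (r z)) - r z * log 2 N)
      \<le> (\<Sum>z\<in>UNIV. (1 / N - r z) / ln 2)"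
    by (intro sum_mono pointwise)
  also have "\<dots> = 0"
    using N by (simp add: r_sum N_def sum_subtractf flip: sum_divide_distrib)
  finally show ?thesis
    by (simp add: entropy2_def N_def sum_subtractf sum_negf r_sum flip: sum_distrib_right)
qed

lemma mutual_info_eq_output_entropy:
  fixes W :: "'a::finite \<Rightarrow> 'b::finite \<Rightarrow> real"
  assumes p: "is_distr p" and W_nonneg: "\<And>u z. 0 \<le> W u z"
    and row_entropy: "\<And>u. entropy2 (W u) = h"
  shows "mutual_info p W = entropy2 (output_distr p W) - h"
proof -
  define r where "r z = (\<Sum>u'\<in>UNIV. p u' * W u' z)" for z
  have r_eq: "output_distr p W = r" by (simp add: fun_eq_iff output_distr_def r_def)
  define plogp :: "real \<Rightarrow> real" where "plogp x = (if x = 0 then 0 else x * log 2 x)" for x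
  have p_nonneg: "\<And>u. 0 \<le> p u" and p_sum: "(\<Sum>u\<in>UNIV. p u) = 1"
    using p by (auto simp: is_distr_def)
  have term_split: "(if p u * W u z = 0 then 0 else p u * W u z * log 2 (W u z / r z))
      = p u * plogp (W u z) - p u * W u z * log 2 (r z)" for u z
  proof (cases "p u * W u z = 0")
    case True
    then show ?thesis by (auto simp: plogp_def)
  next
    case False
    then have pos: "0 < p u" "0 < W u z"
      using p_nonneg[of u] W_nonneg[of u z] by (auto simp: less_le)
    have "p u * W u z \<le> r z" unfolding r_def
      using p_nonneg W_nonneg by (intro member_le_sum) auto
    then have "0 < r z" using pos by (smt (verit) mult_pos_pos)
    then show ?thesis using pos by (simp add: plogp_def log_divide algebra_simps)
  qed
  have "mutual_info p W
      = (\<Sum>u\<in>UNIV. p u * (\<Sum>z\<in>UNIV. plogp (W u z))) - (\<Sum>u\<in>UNIV. \<Sum>z\<in>UNIV. p u * W u z * log 2 (r z))"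
    unfolding mutual_info_def r_def[symmetric] term_split
    by (simp add: sum_subtractf sum_distrib_left)
  also have "(\<Sum>u\<in>UNIV. \<Sum>z\<in>UNIV. p u * W u z * log 2 (r z)) = (\<Sum>z\<in>UNIV. \<Sum>u\<in>UNIV. p u * W u z * log 2 (r z))"
    by (rule sum.swap)
  also have "(\<Sum>u\<in>UNIV. p u * (\<Sum>z\<in>UNIV. plogp (W u z))) = - h"
  proof -
    have "(\<Sum>z\<in>UNIV. plogp (W u z)) = - h" for u
      using row_entropy[of u] unfolding entropy2_def plogp_def by linarith
    then show ?thesis by (simp add: sum_negf p_sum flip: sum_distrib_right)
  qed
  also have "(\<Sum>z\<in>UNIV. \<Sum>u\<in>UNIV. p u * W u z * log 2 (r z)) = - entropy2 r"
    by (auto simp: entropy2_def r_def simp flip: sum_distrib_right intro!: sum.cong)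
  finally show ?thesis unfolding r_eq by simp
qed

lemma mutual_info_le_uniform:
  fixes W :: "'a::finite \<Rightarrow> 'a \<Rightarrow> real"
  assumes p: "is_distr p" and W_nonneg: "\<And>u z. 0 \<le> W u z"
    and row_sum: "\<And>u. (\<Sum>z\<in>UNIV. W u z) = 1" and col_sum: "\<And>z. (\<Sum>u\<in>UNIV. W u z) = 1"
    and row_entropy: "\<And>u. entropy2 (W u) = h"
  shows "mutual_info p W \<le> mutual_info uniform_distr W"
proof -
  have "mutual_info p W = entropy2 (output_distr p W) - h"
    using p W_nonneg row_entropy by (rule mutual_info_eq_output_entropy)
  also have "\<dots> \<le> log 2 (real (card (UNIV :: 'a set))) - h"
    using entropy2_le_log_card[OF is_distr_output_distr[OF p W_nonneg row_sum]] by simp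
  also have "\<dots> = entropy2 (output_distr uniform_distr W) - h"
    by (simp add: output_distr_uniform col_sum entropy2_uniform_distr)
  also have "\<dots> = mutual_info uniform_distr W"
    using is_distr_uniform_distr W_nonneg row_entropy by (rule mutual_info_eq_output_entropy[symmetric])
  finally show ?thesis .
qed

fun base_add :: "base \<Rightarrow> base \<Rightarrow> base" where
  "base_add A z = z"
| "base_add G A = G" | "base_add G G = A" | "base_add G C = T" | "base_add G T = C"
| "base_add C A = C" | "base_add C C = A" | "base_add C G = T" | "base_add C T = G"
| "base_add T A = T" | "base_add T T = A" | "base_add T G = C" | "base_add T C = G"

lemma base_add_commute: "base_add y z = base_add z y"
  by (cases y; cases z) auto

lemma base_add_assoc: "base_add (base_add x y) z = base_add x (base_add y z)"
  by (cases x; cases y; cases z) auto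

lemma base_add_left_commute: "base_add x (base_add y z) = base_add y (base_add x z)"
  by (cases x; cases y; cases z) auto

lemma base_add_cancel: "base_add y (base_add y z) = z"
  by (cases y; cases z) auto

lemma sum_UNIV_base: "(\<Sum>x\<in>UNIV. f x) = f A + f C + f T + f G"
  by (simp add: UNIV_base add.assoc)

lemma kimura_translate: "kimura q \<gamma> y z = kimura q \<gamma> A (base_add y z)"
  by (cases y; cases z) (auto simp: kimura_def doubleton_eq_iff)

lemma kimura_pow_translate: "kimura_pow q \<gamma> n y z = kimura_pow q \<gamma> n A (base_add y z)"
proof (induction n arbitrary: y z)
  case 0
  then show ?case by (cases y; cases z) auto
next
  case (Suc n)
  have "kimura_pow q \<gamma> (Suc n) y z
      = (\<Sum>w\<in>UNIV. kimura_pow q \<gamma> n A (base_add y w) * kimura q \<gamma> A (base_add w z))"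
    by (simp only: kimura_pow.simps Suc.IH[of y] kimura_translate[of q \<gamma> _ z])
  also have "\<dots> = (\<Sum>v\<in>UNIV. kimura_pow q \<gamma> n A v * kimura q \<gamma> A (base_add v (base_add y z)))"
    by (rule sum.reindex_bij_witness[of _ "base_add y" "base_add y"])
      (simp_all add: base_add_cancel base_add_assoc base_add_left_commute)
  also have "\<dots> = kimura_pow q \<gamma> (Suc n) A (base_add y z)"
    by (simp only: kimura_pow.simps kimura_translate[of q \<gamma> _ "base_add y z"])
  finally show ?case .
qed

lemma kimura_nonneg:
  assumes "0 \<le> q" "q \<le> 1" "0 \<le> \<gamma>" "\<gamma> \<le> 3 / 2"
  shows "0 \<le> kimura q \<gamma> y z"
  using assms by (auto simp: kimura_def intro!: mult_nonneg_nonneg)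

lemma kimura_row_sum: "(\<Sum>z\<in>UNIV. kimura q \<gamma> y z) = 1"
  by (cases y) (simp_all add: sum_UNIV_base kimura_def doubleton_eq_iff field_simps)

lemma kimura_pow_nonneg:
  assumes "0 \<le> q" "q \<le> 1" "0 \<le> \<gamma>" "\<gamma> \<le> 3 / 2"
  shows "0 \<le> kimura_pow q \<gamma> n y z"
  by (induction n arbitrary: z) (auto intro!: sum_nonneg mult_nonneg_nonneg kimura_nonneg assms)

lemma kimura_pow_row_sum: "(\<Sum>z\<in>UNIV. kimura_pow q \<gamma> n y z) = 1"
proof (induction n)
  case 0
  then show ?case by simp
next
  case (Suc n)
  have "(\<Sum>z\<in>UNIV. kimura_pow q \<gamma> (Suc n) y z)
      = (\<Sum>w\<in>UNIV. kimura_pow q \<gamma> n y w * (\<Sum>z\<in>UNIV. kimura q \<gamma> w z))"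
    unfolding kimura_pow.simps sum_distrib_left by (rule sum.swap)
  then show ?case by (simp add: kimura_row_sum Suc)
qed

lemma card_codon: "card (UNIV :: codon set) = 64"
  by (simp add: UNIV_base flip: UNIV_Times_UNIV)

definition codon_add :: "codon \<Rightarrow> codon \<Rightarrow> codon" where
  "codon_add u z = (case (u, z) of ((u1, u2, u3), (z1, z2, z3)) \<Rightarrow>
     (base_add u1 z1, base_add u2 z2, base_add u3 z3))"

definition codon_noise :: "real \<Rightarrow> real \<Rightarrow> nat \<Rightarrow> codon \<Rightarrow> real" where
  "codon_noise q \<gamma> m w = (case w of (w1, w2, w3) \<Rightarrow>
     kimura_pow q \<gamma> m A w1 * kimura_pow q \<gamma> m A w2 * kimura_pow q \<gamma> m A w3)"

lemma codon_add_commute: "codon_add u z = codon_add z u"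
  by (cases u; cases z) (simp add: codon_add_def base_add_commute)

lemma sum_codon_add: "(\<Sum>z\<in>UNIV. f (codon_add u z)) = (\<Sum>z\<in>UNIV. f z)"
  by (rule sum.reindex_bij_witness[of _ "codon_add u" "codon_add u"])
    (auto simp: codon_add_def base_add_cancel split: prod.splits)

lemma codon_channel_translate: "codon_channel q \<gamma> m u z = codon_noise q \<gamma> m (codon_add u z)"
proof -
  obtain u1 u2 u3 z1 z2 z3 where "u = (u1, u2, u3)" and "z = (z1, z2, z3)"
    by (cases u, cases z) auto
  then show ?thesis
    by (simp add: codon_channel_def codon_add_def codon_noise_def kimura_pow_translate[of q \<gamma> m u1 z1]
        kimura_pow_translate[of q \<gamma> m u2 z2] kimura_pow_translate[of q \<gamma> m u3 z3])
qed

lemma codon_noise_sum: "(\<Sum>w\<in>UNIV. codon_noise q \<gamma> m w) = 1"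
  by (simp add: codon_noise_def kimura_pow_row_sum sum.cartesian_product'
      flip: UNIV_Times_UNIV sum_distrib_left sum_distrib_right)

lemma codon_channel_nonneg:
  assumes "0 \<le> q" "q \<le> 1" "0 \<le> \<gamma>" "\<gamma> \<le> 3 / 2"
  shows "0 \<le> codon_channel q \<gamma> m u z"
  by (cases u; cases z) (auto simp: codon_channel_def intro!: mult_nonneg_nonneg kimura_pow_nonneg assms)

lemma codon_channel_row_sum: "(\<Sum>z\<in>UNIV. codon_channel q \<gamma> m u z) = 1"
  by (simp add: codon_channel_translate sum_codon_add codon_noise_sum)

lemma codon_channel_col_sum: "(\<Sum>u\<in>UNIV. codon_channel q \<gamma> m u z) = 1"
  by (simp add: codon_channel_translate codon_add_commute[of _ z] sum_codon_add codon_noise_sum)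

lemma entropy2_codon_channel_row:
  "entropy2 (codon_channel q \<gamma> m u) = entropy2 (codon_noise q \<gamma> m)"
  unfolding entropy2_def codon_channel_translate
  by (simp only: sum_codon_add[where f = "\<lambda>w. if codon_noise q \<gamma> m w = 0 then 0
      else codon_noise q \<gamma> m w * log 2 (codon_noise q \<gamma> m w)"])

lemma capacity_nc_eq_uniform:
  assumes "0 \<le> q" "q \<le> 1" "0 \<le> \<gamma>" "\<gamma> \<le> 3 / 2"
  shows "capacity_nc q \<gamma> m = mutual_info uniform_distr (codon_channel q \<gamma> m)"
  unfolding capacity_nc_def
  by (rule cSup_eq_maximum)
    (auto intro!: is_distr_uniform_distr mutual_info_le_uniform codon_channel_nonneg assms
      codon_channel_row_sum codon_channel_col_sum entropy2_codon_channel_row)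

lemma sum_over_fibres: "(\<Sum>u\<in>UNIV. f u) = (\<Sum>x'\<in>UNIV. \<Sum>u\<in>fibre x'. f u)"
  using sum.group[of UNIV UNIV alpha f] by (simp add: fibre_def)

lemma fibre_nonempty: "fibre x' \<noteq> {}"
proof -
  have "alpha ` UNIV = UNIV"
    by (simp add: UNIV_base flip: UNIV_Times_UNIV) (auto simp: UNIV_amino)
  then obtain u where "x' = alpha u" by (metis surjD)
  then have "u \<in> fibre x'" by (simp add: fibre_def)
  then show ?thesis by blast
qed

lemma is_distr_alpha_unif: "is_distr alpha_unif"
proof -
  have "(\<Sum>x'\<in>UNIV. real (card (fibre x'))) = real (card (UNIV :: codon set))"
    using sum_over_fibres[of "\<lambda>_. 1 :: real"] by simp
  then show ?thesis
    by (simp add: is_distr_def alpha_unif_def card_codon flip: sum_divide_distrib)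
qed

lemma is_distr_induced_codon_distr:
  assumes px: "is_distr px" and c: "admissible_cond c"
  shows "is_distr (induced_codon_distr px c)"
proof -
  have "(\<Sum>u\<in>UNIV. induced_codon_distr px c u) = (\<Sum>x'\<in>UNIV. \<Sum>u\<in>fibre x'. px x' * c x' u)"
    unfolding sum_over_fibres[of "induced_codon_distr px c"]
    by (intro sum.cong refl) (simp add: induced_codon_distr_def fibre_def)
  also have "\<dots> = (\<Sum>x'\<in>UNIV. px x' * (\<Sum>u\<in>fibre x'. c x' u))"
    by (simp add: sum_distrib_left)
  finally show ?thesis
    using assms by (simp add: is_distr_def admissible_cond_def induced_codon_distr_def)
qed

definition uniform_on_fibre :: "amino \<Rightarrow> codon \<Rightarrow> real" where
  "uniform_on_fibre x' u = (if alpha u = x' then 1 / real (card (fibre x')) else 0)"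

lemma admissible_uniform_on_fibre: "admissible_cond uniform_on_fibre"
proof -
  have "(\<Sum>u\<in>fibre x'. uniform_on_fibre x' u) = 1" for x'
    using fibre_nonempty[of x'] by (simp add: uniform_on_fibre_def fibre_def)
  then show ?thesis
    by (auto simp: admissible_cond_def uniform_on_fibre_def fibre_def)
qed

lemma induced_alpha_unif_uniform_on_fibre:
  "induced_codon_distr alpha_unif uniform_on_fibre = uniform_distr"
  using fibre_nonempty
  by (simp add: fun_eq_iff induced_codon_distr_def alpha_unif_def uniform_on_fibre_def
      uniform_distr_def card_codon)

theorem lemma2:
  fixes q \<gamma> :: real and m :: nat
  assumes "0 \<le> q" "q \<le> 1" "0 \<le> \<gamma>" "\<gamma> \<le> 3 / 2" "1 \<le> m"
  shows "achievable_rate q \<gamma> m alpha_unif = capacity_nc q \<gamma> m - entropy2 alpha_unif"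
proof -
  let ?I = "\<lambda>p. mutual_info p (codon_channel q \<gamma> m)"
  have "(SUP c\<in>{c. admissible_cond c}. ?I (induced_codon_distr alpha_unif c)) = ?I uniform_distr"
  proof (rule cSup_eq_maximum)
    show "?I uniform_distr \<in> (\<lambda>c. ?I (induced_codon_distr alpha_unif c)) ` {c. admissible_cond c}"
      using admissible_uniform_on_fibre induced_alpha_unif_uniform_on_fibre by (metis image_eqI mem_Collect_eq)
  next
    fix x
    assume "x \<in> (\<lambda>c. ?I (induced_codon_distr alpha_unif c)) ` {c. admissible_cond c}"
    then show "x \<le> ?I uniform_distr"
      using assms by (auto intro!: mutual_info_le_uniform is_distr_induced_codon_distr
          is_distr_alpha_unif codon_channel_nonneg codon_channel_row_sum codon_channel_col_sum
          entropy2_codon_channel_row)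
  qed
  then show ?thesis
    using capacity_nc_eq_uniform[OF assms(1-4)] by (simp add: achievable_rate_def)
qed

end
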